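(* Let $\varphi:\mathbb{R}^n\times\mathbb{R}^m\to\mathbb{R}\cup\{+\infty\}$ be a closed proper convex function and define $L(x,\lambda)=\inf_u\{\varphi(x,u)-\langle\lambda,u\rangle\}$. Let $H\in\mathbb{R}^{m\times m}$ be symmetric positive definite, let $(a_k),(c_k)$ be positive and $(b_k)$ nonnegative real sequences, let $\lambda_0\in\mathbb{R}^m$, $z_0=\lambda_0$, and for $k\geqslant0$ let $$\tilde\lambda_{k+1}=\frac{1}{b_k+1}z_k+\frac{b_k}{b_k+1}\lambda_k,$$ $$(x_{k+1},u_{k+1})\in\arg\min_{x,u}\Big\{\varphi(x,u)-\langle\tilde\lambda_{k+1},u\rangle+\frac{c_k}{2(b_k+1)}\|u\|_H^2\Big\},$$ $$\lambda_{k+1}=\tilde\lambda_{k+1}-\frac{c_k}{b_k+1}Hu_{k+1},\qquad z_{k+1}=z_k+\frac{a_k}{c_k}(b_k+1)H(\lambda_{k+1}-\tilde\lambda_{k+1}),$$ where the minimizers are assumed to exist. Then for every $k\geqslant1$, $$\min_xL(x,\lambda_k)=L(x_k,\lambda_k)=\varphi(x_k,u_k)-\langle\lambda_k,u_k\rangle.$$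
   Context: $\|u\|_H^2=u^{\mathrm T}Hu$. *)

theory Defs
  imports "HOL-Analysis.Analysis"
begin

definition epigraph_e :: "('a \<Rightarrow> ereal) \<Rightarrow> ('a \<times> real) set" where
  "epigraph_e f = {(p, t). f p \<le> ereal t}"

definition proper_fun :: "('a \<Rightarrow> ereal) \<Rightarrow> bool" where
  "proper_fun f \<longleftrightarrow> (\<forall>p. f p \<noteq> -\<infinity>) \<and> (\<exists>p. f p \<noteq> \<infinity>)"

definition convex_fun_e :: "('a::real_vector \<Rightarrow> ereal) \<Rightarrow> bool" where
  "convex_fun_e f \<longleftrightarrow> convex (epigraph_e f)"

definition closed_fun_e :: "('a::topological_space \<Rightarrow> ereal) \<Rightarrow> bool" where
  "closed_fun_e f \<longleftrightarrow> closed (epigraph_e f)"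

definition Lagr :: "('a \<times> 'b::real_inner \<Rightarrow> ereal) \<Rightarrow> 'a \<Rightarrow> 'b \<Rightarrow> ereal" where
  "Lagr \<phi> x lam = (INF u. \<phi> (x, u) - ereal (lam \<bullet> u))"

definition sym_pos_def :: "real^'m^'m \<Rightarrow> bool" where
  "sym_pos_def H \<longleftrightarrow> transpose H = H \<and> (\<forall>u. u \<noteq> 0 \<longrightarrow> u \<bullet> (H *v u) > 0)"

end

theory Submission
  imports Defs
begin

text \<open>
  Write \<open>s = c (k-1) / (b (k-1) + 1)\<close>. The update \<open>lam k = lamt k - s H u k\<close> subtracts
  from \<open>lamt k\<close> the gradient at \<open>u k\<close> of the smooth term \<open>s/2 \<parallel>u\<parallel>\<^sub>H\<^sup>2\<close> of the
  subproblem. A minimizer of a convex function plus a differentiable one also minimizes the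
  convex function plus the linearization of the differentiable one there (compare values
  along the segment towards any other point and let its length tend to 0). Hence
  \<open>(x k, u k)\<close> minimizes \<open>\<phi> (x, u) - \<langle>lam k, u\<rangle>\<close> jointly in \<open>(x, u)\<close>, which gives both
  equalities.
\<close>

lemma has_derivative_along_ray:
  fixes h :: "'a::real_normed_vector \<Rightarrow> real"
  assumes "(h has_derivative h') (at p)"
  shows "((\<lambda>t. (h (p + t *\<^sub>R d) - h p) / t) \<longlongrightarrow> h' d) (at_right 0)"
proof -
  have ray: "((\<lambda>t. p + t *\<^sub>R d) has_derivative (\<lambda>t. t *\<^sub>R d)) (at 0)"
    by (auto intro!: derivative_eq_intros)
  have "((\<lambda>t. h (p + t *\<^sub>R d)) has_derivative (\<lambda>t. h' (t *\<^sub>R d))) (at 0)"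
    using has_derivative_compose[OF ray] assms by simp
  moreover have "h' (t *\<^sub>R d) = t * h' d" for t
    using linear_scale[OF has_derivative_linear[OF assms]] by simp
  ultimately have "((\<lambda>t. h (p + t *\<^sub>R d)) has_real_derivative h' d) (at 0)"
    by (simp add: has_field_derivative_def mult_commute_abs)
  then show ?thesis
    by (simp add: DERIV_def filterlim_at_split)
qed

lemma has_derivative_quadratic_form:
  fixes H :: "real^'m^'m"
  assumes "transpose H = H"
  shows "((\<lambda>u. u \<bullet> (H *v u)) has_derivative (\<lambda>d. 2 * ((H *v v) \<bullet> d))) (at v)"
proof -
  have "((\<lambda>u. u \<bullet> (H *v u)) has_derivative (\<lambda>d. v \<bullet> (H *v d) + d \<bullet> (H *v v))) (at v)"
    by (auto intro!: derivative_eq_intros bounded_linear_imp_has_derivative)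
  moreover have "v \<bullet> (H *v d) = (H *v v) \<bullet> d" for d
    by (metis assms dot_lmul_matrix vector_transpose_matrix)
  ultimately show ?thesis by (simp add: inner_commute)
qed

lemma convex_fun_e_combination_le:
  assumes "convex_fun_e f" "f p \<le> ereal a" "f q \<le> ereal b" "0 \<le> t" "t \<le> 1"
  shows "f ((1 - t) *\<^sub>R p + t *\<^sub>R q) \<le> ereal ((1 - t) * a + t * b)"
proof -
  have "(p, a) \<in> epigraph_e f" "(q, b) \<in> epigraph_e f"
    using assms(2,3) by (simp_all add: epigraph_e_def)
  then have "(1 - t) *\<^sub>R (p, a) + t *\<^sub>R (q, b) \<in> epigraph_e f"
    using assms(1,4,5) by (intro convexD) (simp_all add: convex_fun_e_def)
  then show ?thesis by (simp add: epigraph_e_def)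
qed

lemma convex_plus_differentiable_minimizer_linearized:
  fixes f :: "'a::real_normed_vector \<Rightarrow> ereal" and h :: "'a \<Rightarrow> real"
  assumes f: "convex_fun_e f" "proper_fun f"
    and h: "(h has_derivative h') (at p)"
    and minimizer: "\<And>q. f p + ereal (h p) \<le> f q + ereal (h q)"
  shows "f p \<le> f q + ereal (h' (q - p))"
proof -
  have not_minf: "\<And>q. f q \<noteq> -\<infinity>" using f(2) by (simp add: proper_fun_def)
  obtain q0 where "f q0 \<noteq> \<infinity>" using f(2) by (auto simp: proper_fun_def)
  then have "f p \<noteq> \<infinity>" using minimizer[of q0] not_minf[of q0] by (cases "f q0") auto
  then obtain A where A: "f p = ereal A" using not_minf[of p] by (cases "f p") auto
  show ?thesis
  proof (cases "f q")
    case (real B)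
    define d where "d = q - p"
    have "A - B \<le> (h (p + t *\<^sub>R d) - h p) / t" if t: "0 < t" "t \<le> 1" for t
    proof -
      have "f (p + t *\<^sub>R d) \<le> ereal ((1 - t) * A + t * B)"
        using convex_fun_e_combination_le[OF f(1), of p A q B t] A real t
        by (simp add: d_def algebra_simps)
      with minimizer[of "p + t *\<^sub>R d"] A have "A + h p \<le> (1 - t) * A + t * B + h (p + t *\<^sub>R d)"
        using not_minf[of "p + t *\<^sub>R d"] by (cases "f (p + t *\<^sub>R d)") auto
      with t show ?thesis by (simp add: field_simps)
    qed
    then have "\<forall>\<^sub>F t in at_right 0. A - B \<le> (h (p + t *\<^sub>R d) - h p) / t"
      by (auto simp: eventually_at_right_field intro!: exI[of _ 1])
    then have "A - B \<le> h' d"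
      by (intro tendsto_lowerbound[OF has_derivative_along_ray[OF h]]) simp_all
    then show ?thesis using A real by (simp add: d_def)
  qed (use not_minf in auto)
qed

lemma augmented_minimizer_minimizes_shifted_lagrangian:
  fixes \<phi> :: "'a::real_normed_vector \<times> (real^'m) \<Rightarrow> ereal" and H :: "real^'m^'m"
  assumes \<phi>: "convex_fun_e \<phi>" "proper_fun \<phi>" and H: "transpose H = H"
    and minimizer: "\<And>x' u'. \<phi> (x0, u0) - ereal (\<mu> \<bullet> u0) + ereal (s / 2 * (u0 \<bullet> (H *v u0)))
        \<le> \<phi> (x', u') - ereal (\<mu> \<bullet> u') + ereal (s / 2 * (u' \<bullet> (H *v u')))"
  shows "\<phi> (x0, u0) - ereal ((\<mu> - s *\<^sub>R (H *v u0)) \<bullet> u0)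
      \<le> \<phi> (x', u') - ereal ((\<mu> - s *\<^sub>R (H *v u0)) \<bullet> u')"
proof -
  define h where "h p = s / 2 * (snd p \<bullet> (H *v snd p)) - \<mu> \<bullet> snd p"
    for p :: "'a \<times> (real^'m)"
  have quadratic: "((\<lambda>p. snd p \<bullet> (H *v snd p)) has_derivative (\<lambda>d. 2 * ((H *v u0) \<bullet> snd d)))
      (at (x0, u0))"
    using has_derivative_compose[OF has_derivative_snd[OF has_derivative_ident]
        has_derivative_quadratic_form[OF H], of "(x0, u0)" UNIV] by simp
  have h_deriv: "(h has_derivative (\<lambda>d. s * ((H *v u0) \<bullet> snd d) - \<mu> \<bullet> snd d)) (at (x0, u0))"
    unfolding h_def
    using has_derivative_diff[OF has_derivative_mult_right[OF quadratic, of "s / 2"]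
          has_derivative_inner_right[OF has_derivative_snd[OF has_derivative_ident], of \<mu>]]
    by simp
  have h_min: "\<phi> (x0, u0) + ereal (h (x0, u0)) \<le> \<phi> q + ereal (h q)" for q
    using minimizer[of "fst q" "snd q"]
    by (cases "\<phi> (x0, u0)"; cases "\<phi> q") (auto simp: h_def)
  have "\<phi> (x0, u0) \<le> \<phi> (x', u') + ereal (s * ((H *v u0) \<bullet> (u' - u0)) - \<mu> \<bullet> (u' - u0))"
    using convex_plus_differentiable_minimizer_linearized[OF \<phi> h_deriv h_min, of "(x', u')"]
    by simp
  moreover have "(\<mu> - s *\<^sub>R (H *v u0)) \<bullet> u'
      = (\<mu> - s *\<^sub>R (H *v u0)) \<bullet> u0 - (s * ((H *v u0) \<bullet> (u' - u0)) - \<mu> \<bullet> (u' - u0))"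
    by (simp add: inner_diff_left inner_diff_right right_diff_distrib)
  ultimately show ?thesis
    by (cases "\<phi> (x0, u0)"; cases "\<phi> (x', u')") simp_all
qed

lemma Lagr_at_joint_minimizer:
  assumes "\<And>x' u'. \<phi> (x0, u0) - ereal (lam \<bullet> u0) \<le> \<phi> (x', u') - ereal (lam \<bullet> u')"
  shows "Lagr \<phi> x0 lam = \<phi> (x0, u0) - ereal (lam \<bullet> u0)"
    and "(INF x'. Lagr \<phi> x' lam) = Lagr \<phi> x0 lam"
proof -
  show Lagr_x0: "Lagr \<phi> x0 lam = \<phi> (x0, u0) - ereal (lam \<bullet> u0)"
    unfolding Lagr_def by (rule INF_eqI) (use assms in \<open>auto intro: INF_lower2\<close>)
  show "(INF x'. Lagr \<phi> x' lam) = Lagr \<phi> x0 lam"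
  proof (rule antisym)
    show "(INF x'. Lagr \<phi> x' lam) \<le> Lagr \<phi> x0 lam" by (rule INF_lower) simp
    show "Lagr \<phi> x0 lam \<le> (INF x'. Lagr \<phi> x' lam)"
      unfolding Lagr_x0 unfolding Lagr_def by (intro INF_greatest) (rule assms)
  qed
qed

theorem lemma2:
  fixes \<phi> :: "(real^'nx) \<times> (real^'mu) \<Rightarrow> ereal"
    and H :: "real^'mu^'mu"
    and a b c :: "nat \<Rightarrow> real"
    and lam lamt z u :: "nat \<Rightarrow> real^'mu"
    and x :: "nat \<Rightarrow> real^'nx"
  assumes phi: "closed_fun_e \<phi>" "proper_fun \<phi>" "convex_fun_e \<phi>"
    and H: "sym_pos_def H"
    and a: "\<And>k. a k > 0" and c: "\<And>k. c k > 0" and b: "\<And>k. b k \<ge> 0"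
    and z0: "z 0 = lam 0"
    and lamt: "\<And>k. lamt (Suc k) = (1 / (b k + 1)) *\<^sub>R z k + (b k / (b k + 1)) *\<^sub>R lam k"
    and argmin: "\<And>k x' u'.
        \<phi> (x (Suc k), u (Suc k)) - ereal (lamt (Suc k) \<bullet> u (Suc k))
          + ereal (c k / (2 * (b k + 1)) * (u (Suc k) \<bullet> (H *v u (Suc k))))
        \<le> \<phi> (x', u') - ereal (lamt (Suc k) \<bullet> u')
          + ereal (c k / (2 * (b k + 1)) * (u' \<bullet> (H *v u')))"
    and lamupd: "\<And>k. lam (Suc k) = lamt (Suc k) - (c k / (b k + 1)) *\<^sub>R (H *v u (Suc k))"
    and zupd: "\<And>k. z (Suc k) = z k + (a k / c k * (b k + 1)) *\<^sub>R (H *v (lam (Suc k) - lamt (Suc k)))"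
    and k: "k \<ge> 1"
  shows "(INF x'. Lagr \<phi> x' (lam k)) = Lagr \<phi> (x k) (lam k)
       \<and> Lagr \<phi> (x k) (lam k) = \<phi> (x k, u k) - ereal (lam k \<bullet> u k)"
proof -
  obtain j where kj: "k = Suc j" using k by (cases k) auto
  have "transpose H = H" using H by (simp add: sym_pos_def_def)
  moreover have "\<phi> (x k, u k) - ereal (lamt k \<bullet> u k)
        + ereal (c j / (b j + 1) / 2 * (u k \<bullet> (H *v u k)))
      \<le> \<phi> (x', u') - ereal (lamt k \<bullet> u') + ereal (c j / (b j + 1) / 2 * (u' \<bullet> (H *v u')))"
    for x' u'
    using argmin[of j x' u'] by (simp add: kj field_simps)
  ultimately have "\<phi> (x k, u k) - ereal (lam k \<bullet> u k) \<le> \<phi> (x', u') - ereal (lam k \<bullet> u')"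
    for x' u'
    using augmented_minimizer_minimizes_shifted_lagrangian[OF phi(3,2)] by (simp add: kj lamupd)
  then show ?thesis by (blast intro: Lagr_at_joint_minimizer)
qed

end
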